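(* In the mixed Public/Private WOM model described in the context, if the seller discriminates between Private and Public WOM, then the optimal price is $p_2^*=1/2$, the public bonus is $b^*_{pub}=\dfrac{c}{\underline{k}^*\,\phi(L(\underline{k}^* ),p_2^* )}$, the private bonus is $b^*_{priv}=\dfrac{c}{\phi(L(\underline{k}^* ),p_2^* )}$, where $$\underline{k}^*\in\arg\max_{\underline{k}}\left[\left(\frac12-\mathbb{E}[B\mid\underline{k}]\right)\frac{\Gamma(L(\underline{k}))}{2}\right],$$ with $\mathbb{E}[B\mid\underline{k}]$ evaluated at $p_2=1/2$.
   Context: A seller (zero marginal cost) faces a unit mass of unit-demand consumers: a fraction $1-\beta\in(0,1)$ informed with reservation value 1 (charged $p_1=1$), and a fraction $\beta$ uninformed with reservation value $v\sim U[0,1]$ (charged $p_2$). Informed consumers are linked to uninformed ones by a directed bipartite network with out-degree distribution $f$ (informed) and in-degree distribution $g$ (uninformed), with $(1-\beta)\sum_k kf(k)=\beta\sum_k kg(k)$; $k_{\min}$ denotes the smallest degree in the support of $f$. With a fraction $L$ of active links, $\Gamma(L)=1-\sum_k g(k)(1-L)^k$ and $\phi(L,p_2)=(1-p_2)\sum_k g(k)\frac{1-(1-L)^k}{kL}$. Informed consumers can pass on information publicly (lump-sum cost $c$ to inform all out-neighbours, rewarded with bonus $b_{pub}$ per successful referral) and/or privately (cost $c$ per contacted neighbour, rewarded with $b_{priv}$). Public communication occurs for consumers with out-degree at least a cutoff $\underline{k}$, with $\underline{k}\,b_{pub}\,\phi=c$ and $b_{priv}\,\phi=c$ (so $b_{priv}=\underline{k}\,b_{pub}$),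 where $\phi=\phi(L(\underline{k}),p_2)$ and the total fraction of active links is $L(\underline{k})=\left(\sum_{k\ge\underline{k}}f(k)\right)\left(1+\sum_{k=k_{\min}}^{\underline{k}}f(k)\right)$. When a friend is informed both ways, each bonus is paid with probability $1/2$. The expected bonus paid per successful referral is $\mathbb{E}[B\mid\underline{k}]=\frac{c}{\phi(L(\underline{k}),p_2)}\left(\sum_{k\ge\underline{k}}f(k)\right)\left[\frac{1+\underline{k}}{2\underline{k}}+\sum_{k=k_{\min}}^{\underline{k}}f(k)\right]$, and the seller chooses $(p_2,\underline{k})$ to maximize $(1-\beta)+\beta(1-p_2)\left(p_2-\mathbb{E}[B\mid\underline{k}]\right)\Gamma(L(\underline{k}))$. *)

theory Defs
  imports Complex_Main
begin

definition kmin :: "(nat \<Rightarrow> real) \<Rightarrow> nat" where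
  "kmin f = (LEAST k. 0 < f k)"

text \<open>Mass of informed consumers with out-degree at least k.\<close>
definition upper_mass :: "(nat \<Rightarrow> real) \<Rightarrow> nat \<Rightarrow> real" where
  "upper_mass f k = (\<Sum>j. if k \<le> j then f j else 0)"

text \<open>Total fraction of active links L(k) for public cutoff k.\<close>
definition Lk :: "(nat \<Rightarrow> real) \<Rightarrow> nat \<Rightarrow> real" where
  "Lk f k = upper_mass f k * (1 + (\<Sum>j = kmin f..k. f j))"

definition Gamma :: "(nat \<Rightarrow> real) \<Rightarrow> real \<Rightarrow> real" where
  "Gamma g L = 1 - (\<Sum>k. g k * (1 - L) ^ k)"

definition phi :: "(nat \<Rightarrow> real) \<Rightarrow> real \<Rightarrow> real \<Rightarrow> real" where
  "phi g L p2 = (1 - p2) * (\<Sum>k. g k * (1 - (1 - L) ^ k) / (real k * L))"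

text \<open>Expected bonus paid per successful referral, given cutoff k and price p2.\<close>
definition EB :: "real \<Rightarrow> (nat \<Rightarrow> real) \<Rightarrow> (nat \<Rightarrow> real) \<Rightarrow> nat \<Rightarrow> real \<Rightarrow> real" where
  "EB c f g k p2 = c / phi g (Lk f k) p2 * upper_mass f k
      * ((1 + real k) / (2 * real k) + (\<Sum>j = kmin f..k. f j))"

definition profit :: "real \<Rightarrow> real \<Rightarrow> (nat \<Rightarrow> real) \<Rightarrow> (nat \<Rightarrow> real) \<Rightarrow> real \<Rightarrow> nat \<Rightarrow> real" where
  "profit \<beta> c f g p2 k = (1 - \<beta>) + \<beta> * (1 - p2) * (p2 - EB c f g k p2) * Gamma g (Lk f k)"

end

theory Submission
  imports Defs
begin

text \<open>The expected bonus is inversely proportional to the share \<open>1 - p\<^sub>2\<close> of uninformed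
  consumers who buy, so the revenue lost to bonuses, \<open>(1 - p\<^sub>2) E[B]\<close>, does not depend on
  the price. The profit therefore separates into the monopoly margin \<open>(1 - p\<^sub>2) p\<^sub>2\<close>, which
  forces \<open>p\<^sub>2 = 1/2\<close>, and a term depending on the cutoff alone, which the optimal cutoff must
  maximise. The bonuses are read off from the indifference conditions.\<close>

lemma EB_price_scaled:
  assumes "q < 1"
  shows "(1 - q) * EB c f g k q = EB c f g k 0"
proof -
  have "(1 - q) * (c / ((1 - q) * s)) = c / s" for s :: real
    using assms by (cases "s = 0") (auto simp: field_simps)
  then show ?thesis
    using assms unfolding EB_def phi_def by (simp add: mult.assoc[symmetric])
qed

lemma profit_eq_margin:
  assumes "q < 1"
  shows "profit \<beta> c f g q k = (1 - \<beta>) + \<beta> * ((1 - q) * q - EB c f g k 0) * Gamma g (Lk f k)"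
proof -
  have "(1 - q) * (q - EB c f g k q) = (1 - q) * q - EB c f g k 0"
    using EB_price_scaled[OF assms, of c f g k] by (simp add: algebra_simps)
  then show ?thesis
    unfolding profit_def by (simp add: mult.assoc)
qed

lemma profit_half_price:
  "profit \<beta> c f g (1/2) k = (1 - \<beta>) + \<beta> * ((1/2 - EB c f g k (1/2)) * Gamma g (Lk f k) / 2)"
  unfolding profit_def by simp

lemma margin_ge_quarter_imp_half:
  fixes q :: real
  assumes "(1 - 1/2) * (1/2) \<le> (1 - q) * q"
  shows "q = 1/2"
proof -
  have "(q - 1/2)\<^sup>2 \<le> 0"
    using assms by (simp add: power2_eq_square algebra_simps)
  then show ?thesis by simp
qed

lemma profit_price_optimal_imp_half:
  assumes "0 < \<beta>" "0 < Gamma g (Lk f k)" "q < 1"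
    and "profit \<beta> c f g (1/2) k \<le> profit \<beta> c f g q k"
  shows "q = 1/2"
proof -
  have "\<beta> * ((1 - 1/2) * (1/2) - EB c f g k 0) * Gamma g (Lk f k)
      \<le> \<beta> * ((1 - q) * q - EB c f g k 0) * Gamma g (Lk f k)"
    using assms(4) profit_eq_margin[of "1/2"] profit_eq_margin[OF assms(3)] by simp
  then have "(1 - 1/2) * (1/2) \<le> (1 - q) * q"
    using assms(1,2) by (simp add: mult_le_cancel_right_pos mult_le_cancel_left_pos)
  then show ?thesis by (rule margin_ge_quarter_imp_half)
qed

theorem proposition5:
  fixes \<beta> c :: real and f g :: "nat \<Rightarrow> real" and K :: "nat set"
    and p2 bpub bpriv :: real and ks :: nat
  assumes beta: "0 < \<beta>" "\<beta> < 1"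
    and cpos: "0 < c"
    and f_nonneg: "\<And>k. 0 \<le> f k" and g_nonneg: "\<And>k. 0 \<le> g k"
    and f_dist: "f sums 1" and g_dist: "g sums 1"
    and mean_deg: "summable (\<lambda>k. real k * f k)" "summable (\<lambda>k. real k * g k)"
      "(1 - \<beta>) * (\<Sum>k. real k * f k) = \<beta> * (\<Sum>k. real k * g k)"
    and Gamma_pos: "\<And>k. k \<in> K \<Longrightarrow> 0 < Gamma g (Lk f k)"
    and opt_mem: "p2 \<in> {0..<1}" "ks \<in> K"
    and opt: "\<And>q j. q \<in> {0..<1} \<Longrightarrow> j \<in> K \<Longrightarrow> profit \<beta> c f g q j \<le> profit \<beta> c f g p2 ks"
    and bpub_eq: "real ks * bpub * phi g (Lk f ks) p2 = c"
    and bpriv_eq: "bpriv * phi g (Lk f ks) p2 = c"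
  shows "p2 = 1/2
    \<and> bpub = c / (real ks * phi g (Lk f ks) p2)
    \<and> bpriv = c / phi g (Lk f ks) p2
    \<and> (\<forall>j\<in>K. (1/2 - EB c f g j (1/2)) * Gamma g (Lk f j) / 2
              \<le> (1/2 - EB c f g ks (1/2)) * Gamma g (Lk f ks) / 2)"
proof -
  have price: "p2 = 1/2"
    using opt[of "1/2" ks] opt_mem Gamma_pos[OF opt_mem(2)]
    by (intro profit_price_optimal_imp_half[OF beta(1)]) auto
  have "phi g (Lk f ks) p2 \<noteq> 0" "real ks \<noteq> 0"
    using bpriv_eq bpub_eq cpos by (metis mult_zero_left mult_zero_right less_irrefl)+
  then have bonuses: "bpub = c / (real ks * phi g (Lk f ks) p2)" "bpriv = c / phi g (Lk f ks) p2"
    using bpub_eq bpriv_eq by (auto simp: field_simps)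
  have "(1/2 - EB c f g j (1/2)) * Gamma g (Lk f j) / 2
      \<le> (1/2 - EB c f g ks (1/2)) * Gamma g (Lk f ks) / 2" if "j \<in> K" for j
    using opt[of "1/2" j] that price beta(1)
    by (simp add: profit_half_price mult_le_cancel_left_pos)
  with price bonuses show ?thesis by blast
qed

end
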